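(* Let $X$, $Y$ be disjoint sets of cardinality at least two, and suppose $M\le\mathrm{Sym}(X)$ and $N\le\mathrm{Sym}(Y)$ are transitive. If, in their respective permutation topologies, $M$ is compactly generated and every point stabiliser in $M$ is compact, and $N$ is compact, then $M\boxtimes N$ is compactly generated and every point stabiliser in $M\boxtimes N$ is compact (in the permutation topology of $\mathrm{Sym}(V_Y)$).
   Context: For a set $V$, the permutation topology on $\mathrm{Sym}(V)$ is the topology of pointwise convergence (pointwise stabilisers of finite subsets form a basis of identity neighbourhoods). Let $T$ be the $(|X|,|Y|)$-biregular tree with natural bipartition $VT=V_X\sqcup V_Y$ (vertices in $V_X$ have valency $|X|$, in $V_Y$ valency $|Y|$). $A(v)$, $\overline{A}(v)$ are the sets of arcs (ordered pairs of adjacent vertices) with origin, resp. terminus, $v$. A legal colouring is a map $c:AT\to X\cup Y$ restricting to a bijection $A(v)\to X$ for $v\in V_X$, to a bijection $A(v)\to Y$ for $v\in V_Y$, and constant on each $\overline{A}(v)$. $U_c(M,N)$ is the group of $g\in\mathrm{Aut}(T)$ with $gV_X=V_X$ and $c|_{A(gv)}\circ g|_{A(v)}\circ(c|_{A(v)})^{-1}$ in $M$ for $v\in V_X$ and in $N$ for $v\in V_Y$. The box product $M\boxtimes N\le\mathrm{Sym}(V_Y)$ is the group induced on $V_Y$ by $U_c(M,N)$. *)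

theory Defs
  imports "HOL-Analysis.Analysis" "HOL-Combinatorics.Permutations"
begin

definition Sym :: "'a set \<Rightarrow> ('a \<Rightarrow> 'a) set" where
  "Sym V = {p. p permutes V}"

definition perm_subgroup :: "'a set \<Rightarrow> ('a \<Rightarrow> 'a) set \<Rightarrow> bool" where
  "perm_subgroup V G \<longleftrightarrow> G \<subseteq> Sym V \<and> id \<in> G
     \<and> (\<forall>p\<in>G. \<forall>q\<in>G. p \<circ> q \<in> G) \<and> (\<forall>p\<in>G. inv p \<in> G)"

definition transitive_on :: "'a set \<Rightarrow> ('a \<Rightarrow> 'a) set \<Rightarrow> bool" where
  "transitive_on V G \<longleftrightarrow> (\<forall>x\<in>V. \<forall>y\<in>V. \<exists>p\<in>G. p x = y)"

definition point_stabiliser :: "('a \<Rightarrow> 'a) set \<Rightarrow> 'a \<Rightarrow> ('a \<Rightarrow> 'a) set" where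
  "point_stabiliser G x = {p \<in> G. p x = x}"

text \<open>Topology of pointwise convergence on Sym(V): a set U is open iff for every
  p in U there is a finite F \<subseteq> V such that all q in Sym(V) agreeing with p on F lie in U
  (i.e. the cosets of pointwise stabilisers of finite sets form a basis).\<close>

definition perm_topology :: "'a set \<Rightarrow> ('a \<Rightarrow> 'a) topology" where
  "perm_topology V = topology (\<lambda>U. U \<subseteq> Sym V \<and>
     (\<forall>p\<in>U. \<exists>F. finite F \<and> F \<subseteq> V \<and> {q \<in> Sym V. \<forall>x\<in>F. q x = p x} \<subseteq> U))"


lemma istopology_perm_topology:
  "istopology (\<lambda>U. U \<subseteq> Sym V \<and>
     (\<forall>p\<in>U. \<exists>F. finite F \<and> F \<subseteq> V \<and> {q \<in> Sym V. \<forall>x\<in>F. q x = p x} \<subseteq> U))"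
  unfolding istopology_def
proof (rule conjI; intro allI impI)
  fix S T :: "('a \<Rightarrow> 'a) set"
  assume S: "S \<subseteq> Sym V \<and> (\<forall>p\<in>S. \<exists>F. finite F \<and> F \<subseteq> V \<and> {q \<in> Sym V. \<forall>x\<in>F. q x = p x} \<subseteq> S)"
    and T: "T \<subseteq> Sym V \<and> (\<forall>p\<in>T. \<exists>F. finite F \<and> F \<subseteq> V \<and> {q \<in> Sym V. \<forall>x\<in>F. q x = p x} \<subseteq> T)"
  show "S \<inter> T \<subseteq> Sym V \<and> (\<forall>p\<in>S \<inter> T. \<exists>F. finite F \<and> F \<subseteq> V \<and> {q \<in> Sym V. \<forall>x\<in>F. q x = p x} \<subseteq> S \<inter> T)"
  proof (intro conjI ballI)
    show "S \<inter> T \<subseteq> Sym V" using S by blast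
    fix p assume "p \<in> S \<inter> T"
    then obtain F G where "finite F" "F \<subseteq> V" "{q \<in> Sym V. \<forall>x\<in>F. q x = p x} \<subseteq> S"
      "finite G" "G \<subseteq> V" "{q \<in> Sym V. \<forall>x\<in>G. q x = p x} \<subseteq> T" using S T by blast
    then show "\<exists>F. finite F \<and> F \<subseteq> V \<and> {q \<in> Sym V. \<forall>x\<in>F. q x = p x} \<subseteq> S \<inter> T"
      by (intro exI[of _ "F \<union> G"]) blast
  qed
next
  fix K :: "('a \<Rightarrow> 'a) set set"
  assume "\<forall>S\<in>K. S \<subseteq> Sym V \<and> (\<forall>p\<in>S. \<exists>F. finite F \<and> F \<subseteq> V \<and> {q \<in> Sym V. \<forall>x\<in>F. q x = p x} \<subseteq> S)" (is "?A")
  note * = this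
  show "\<Union>K \<subseteq> Sym V \<and> (\<forall>p\<in>\<Union>K. \<exists>F. finite F \<and> F \<subseteq> V \<and> {q \<in> Sym V. \<forall>x\<in>F. q x = p x} \<subseteq> \<Union>K)"
  proof (intro conjI ballI)
    show "\<Union>K \<subseteq> Sym V" using * by blast
    fix p assume "p \<in> \<Union>K"
    then obtain S where "S \<in> K" "p \<in> S" by blast
    from conjunct2[OF bspec[OF * \<open>S \<in> K\<close>]] \<open>p \<in> S\<close> obtain F where "finite F" "F \<subseteq> V" "{q \<in> Sym V. \<forall>x\<in>F. q x = p x} \<subseteq> S" by blast
    with \<open>S \<in> K\<close> show "\<exists>F. finite F \<and> F \<subseteq> V \<and> {q \<in> Sym V. \<forall>x\<in>F. q x = p x} \<subseteq> \<Union>K" by blast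
  qed
qed

definition generated_perm_group :: "'a set \<Rightarrow> ('a \<Rightarrow> 'a) set \<Rightarrow> ('a \<Rightarrow> 'a) set" where
  "generated_perm_group V K = \<Inter>{H. perm_subgroup V H \<and> K \<subseteq> H}"

definition compactly_generated :: "'a set \<Rightarrow> ('a \<Rightarrow> 'a) set \<Rightarrow> bool" where
  "compactly_generated V G \<longleftrightarrow>
     (\<exists>K. K \<subseteq> G \<and> compactin (perm_topology V) K \<and> generated_perm_group V K = G)"

definition is_tree :: "('v \<Rightarrow> 'v \<Rightarrow> bool) \<Rightarrow> bool" where
  "is_tree E \<longleftrightarrow> (\<forall>u w. E u w \<longrightarrow> E w u) \<and> (\<forall>u. \<not> E u u)
     \<and> (\<forall>u w. E\<^sup>*\<^sup>* u w)
     \<and> \<not> (\<exists>xs. length xs \<ge> 3 \<and> distinct xs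
            \<and> (\<forall>i. Suc i < length xs \<longrightarrow> E (xs ! i) (xs ! Suc i))
            \<and> E (last xs) (hd xs))"

definition biregular_tree ::
  "('v \<Rightarrow> 'v \<Rightarrow> bool) \<Rightarrow> 'v set \<Rightarrow> 'v set \<Rightarrow> 'c set \<Rightarrow> 'c set \<Rightarrow> bool" where
  "biregular_tree E VX VY X Y \<longleftrightarrow> is_tree E
     \<and> VX \<inter> VY = {} \<and> VX \<union> VY = UNIV
     \<and> (\<forall>u w. E u w \<longrightarrow> (u \<in> VX \<longleftrightarrow> w \<in> VY))
     \<and> (\<forall>v\<in>VX. \<exists>f. bij_betw f {w. E v w} X)
     \<and> (\<forall>v\<in>VY. \<exists>f. bij_betw f {w. E v w} Y)"

definition legal_colouring ::
  "('v \<Rightarrow> 'v \<Rightarrow> bool) \<Rightarrow> 'v set \<Rightarrow> 'v set \<Rightarrow> 'c set \<Rightarrow> 'c set \<Rightarrow> ('v \<times> 'v \<Rightarrow> 'c) \<Rightarrow> bool" where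
  "legal_colouring E VX VY X Y c \<longleftrightarrow>
     (\<forall>v\<in>VX. bij_betw (\<lambda>w. c (v, w)) {w. E v w} X)
     \<and> (\<forall>v\<in>VY. bij_betw (\<lambda>w. c (v, w)) {w. E v w} Y)
     \<and> (\<forall>v u u'. E u v \<longrightarrow> E u' v \<longrightarrow> c (u, v) = c (u', v))"

definition tree_aut :: "('v \<Rightarrow> 'v \<Rightarrow> bool) \<Rightarrow> ('v \<Rightarrow> 'v) set" where
  "tree_aut E = {g. bij g \<and> (\<forall>u w. E u w \<longleftrightarrow> E (g u) (g w))}"

text \<open>The local action c|A(gv) o g|A(v) o (c|A(v))^-1 lies in the group L: written out,
  some sigma in L sends the colour c(v,w) to c(gv,gw) for every neighbour w of v.\<close>

definition local_action_in ::
  "('v \<Rightarrow> 'v \<Rightarrow> bool) \<Rightarrow> ('v \<times> 'v \<Rightarrow> 'c) \<Rightarrow> ('c \<Rightarrow> 'c) set \<Rightarrow> ('v \<Rightarrow> 'v) \<Rightarrow> 'v \<Rightarrow> bool" where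
  "local_action_in E c L g v \<longleftrightarrow>
     (\<exists>\<sigma>\<in>L. \<forall>w. E v w \<longrightarrow> c (g v, g w) = \<sigma> (c (v, w)))"

definition U_c ::
  "('v \<Rightarrow> 'v \<Rightarrow> bool) \<Rightarrow> 'v set \<Rightarrow> 'v set \<Rightarrow> ('v \<times> 'v \<Rightarrow> 'c)
    \<Rightarrow> ('c \<Rightarrow> 'c) set \<Rightarrow> ('c \<Rightarrow> 'c) set \<Rightarrow> ('v \<Rightarrow> 'v) set" where
  "U_c E VX VY c M N = {g \<in> tree_aut E. g ` VX = VX
      \<and> (\<forall>v\<in>VX. local_action_in E c M g v) \<and> (\<forall>v\<in>VY. local_action_in E c N g v)}"

definition box_product ::
  "('v \<Rightarrow> 'v \<Rightarrow> bool) \<Rightarrow> 'v set \<Rightarrow> 'v set \<Rightarrow> ('v \<times> 'v \<Rightarrow> 'c)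
    \<Rightarrow> ('c \<Rightarrow> 'c) set \<Rightarrow> ('c \<Rightarrow> 'c) set \<Rightarrow> ('v \<Rightarrow> 'v) set" where
  "box_product E VX VY c M N =
     (\<lambda>g. \<lambda>v. if v \<in> VY then g v else v) ` U_c E VX VY c M N"

end

theory Submission
  imports Defs
begin

text \<open>The stabiliser in \<open>U_c(M,N)\<close> of a vertex \<open>b\<close> is parametrised by its local action at \<open>b\<close>
  together with, at every other vertex, a local permutation fixing the colour of the arc pointing
  towards \<open>b\<close>; the automorphism is rebuilt outwards from \<open>b\<close>. Restricting the local action at \<open>b\<close>
  to a compact set, the parameter space is a product of compact sets (point stabilisers in \<open>M\<close>
  and \<open>N\<close>), and the parametrisation is continuous because the image of each vertex depends on
  finitely many parameters. Hence vertex stabilisers in \<open>M \<boxtimes> N\<close> are compact.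

  For generation, fix an edge \<open>uv\<close> with \<open>u \<in> V\<^sub>X\<close> and a compact generating set \<open>C\<close> of \<open>M\<close>.
  The group generated by the (compact) stabiliser of \<open>v\<close> and the elements fixing \<open>u\<close> with
  local action in \<open>C\<close> realises a subgroup of local actions at \<open>u\<close> containing \<open>C\<close>, so it
  contains the stabiliser of \<open>u\<close> as well; a group containing the stabilisers of both ends of an
  edge of the connected tree is all of \<open>M \<boxtimes> N\<close>.\<close>

section \<open>The permutation topology\<close>

lemma openin_perm_topology:
  "openin (perm_topology V) U \<longleftrightarrow> U \<subseteq> Sym V \<and>
     (\<forall>p\<in>U. \<exists>F. finite F \<and> F \<subseteq> V \<and> {q \<in> Sym V. \<forall>x\<in>F. q x = p x} \<subseteq> U)"
  unfolding perm_topology_def by (subst topology_inverse'[OF istopology_perm_topology]) simp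

lemma topspace_perm_topology [simp]: "topspace (perm_topology V) = Sym V"
proof -
  have "openin (perm_topology V) (Sym V)"
    unfolding openin_perm_topology by (auto intro!: exI[of _ "{}"])
  then have "Sym V \<subseteq> topspace (perm_topology V)" by (rule openin_subset)
  moreover have "topspace (perm_topology V) \<subseteq> Sym V"
    unfolding topspace_def using openin_perm_topology by blast
  ultimately show ?thesis by blast
qed

lemma Sym_fixes: "q \<in> Sym V \<Longrightarrow> x \<notin> V \<Longrightarrow> q x = x"
  unfolding Sym_def by (simp add: permutes_not_in)

lemma openin_perm_topology_eval: "openin (perm_topology V) {q \<in> Sym V. P (q x)}"
  unfolding openin_perm_topology
proof (intro conjI ballI)
  fix p assume p: "p \<in> {q \<in> Sym V. P (q x)}"
  show "\<exists>F. finite F \<and> F \<subseteq> V \<and> {q \<in> Sym V. \<forall>x\<in>F. q x = p x} \<subseteq> {q \<in> Sym V. P (q x)}"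
  proof (cases "x \<in> V")
    case True then show ?thesis using p by (intro exI[of _ "{x}"]) auto
  next
    case False then show ?thesis using p by (intro exI[of _ "{}"]) (auto simp: Sym_fixes)
  qed
qed auto

lemma closedin_perm_topology_eval: "closedin (perm_topology V) {q \<in> Sym V. q x = a}"
proof -
  have "topspace (perm_topology V) - {q \<in> Sym V. q x = a} = {q \<in> Sym V. q x \<noteq> a}" by auto
  then show ?thesis
    unfolding closedin_def using openin_perm_topology_eval[of V "\<lambda>y. y \<noteq> a" x] by auto
qed

lemma perm_subgroup_Sym: "perm_subgroup V (Sym V)"
  unfolding perm_subgroup_def Sym_def by (auto intro: permutes_compose permutes_inv)

lemma generated_perm_group_least:
  "perm_subgroup V H \<Longrightarrow> K \<subseteq> H \<Longrightarrow> generated_perm_group V K \<subseteq> H"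
  unfolding generated_perm_group_def by blast

lemma generated_perm_group_superset: "K \<subseteq> generated_perm_group V K"
  unfolding generated_perm_group_def by blast

lemma perm_subgroup_generated_perm_group:
  assumes "K \<subseteq> Sym V"
  shows "perm_subgroup V (generated_perm_group V K)"
proof -
  let ?F = "{H. perm_subgroup V H \<and> K \<subseteq> H}"
  have "Sym V \<in> ?F" using perm_subgroup_Sym assms by blast
  then have "perm_subgroup V (\<Inter>?F)"
    unfolding perm_subgroup_def[of V "\<Inter>?F"] unfolding perm_subgroup_def by blast
  then show ?thesis unfolding generated_perm_group_def .
qed

section \<open>Legally coloured biregular trees\<close>

locale coloured_tree =
  fixes E :: "'v \<Rightarrow> 'v \<Rightarrow> bool" and VX VY :: "'v set" and X Y :: "'c set"
    and c :: "'v \<times> 'v \<Rightarrow> 'c"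
  assumes X_nonempty: "X \<noteq> {}" and Y_nonempty: "Y \<noteq> {}"
    and tree: "biregular_tree E VX VY X Y"
    and legal: "legal_colouring E VX VY X Y c"
begin

lemma adj_sym: "E u w \<Longrightarrow> E w u"
  using tree unfolding biregular_tree_def is_tree_def by blast

lemma adj_connected: "E\<^sup>*\<^sup>* u w"
  using tree unfolding biregular_tree_def is_tree_def by blast

lemma adj_VX_iff_VY: "E u w \<Longrightarrow> u \<in> VX \<longleftrightarrow> w \<in> VY"
  using tree unfolding biregular_tree_def by blast

lemma not_VX_iff_VY: "v \<notin> VX \<longleftrightarrow> v \<in> VY"
  using tree unfolding biregular_tree_def by blast

lemma adj_VX_iff_not_VX: "E u w \<Longrightarrow> w \<in> VX \<longleftrightarrow> u \<notin> VX"
  using adj_VX_iff_VY adj_sym not_VX_iff_VY by blast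

lemma no_cycle:
  "\<not> (length xs \<ge> 3 \<and> distinct xs \<and> (\<forall>i. Suc i < length xs \<longrightarrow> E (xs ! i) (xs ! Suc i))
      \<and> E (last xs) (hd xs))"
  using tree unfolding biregular_tree_def is_tree_def by blast

definition colours :: "'v \<Rightarrow> 'c set" where
  "colours v = (if v \<in> VX then X else Y)"

lemma arc_colour_bij: "bij_betw (\<lambda>w. c (v, w)) {w. E v w} (colours v)"
  using legal not_VX_iff_VY unfolding legal_colouring_def colours_def by auto

text \<open>By legality the colour of an arc depends only on its terminus.\<close>

definition in_colour :: "'v \<Rightarrow> 'c" where
  "in_colour w = c (SOME p. E p w, w)"

lemma arc_colour_eq_in_colour: "E p w \<Longrightarrow> c (p, w) = in_colour w"
  using legal unfolding in_colour_def legal_colouring_def by (metis (mono_tags) someI_ex)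

lemma in_colour_bij: "bij_betw in_colour {w. E v w} (colours v)"
  using arc_colour_bij[of v]
  by (rule bij_betw_cong[THEN iffD1, rotated]) (simp add: arc_colour_eq_in_colour)

lemma in_colour_mem: "E v w \<Longrightarrow> in_colour w \<in> colours v"
  using in_colour_bij[of v] unfolding bij_betw_def by auto

lemma in_colour_inj: "E v w \<Longrightarrow> E v w' \<Longrightarrow> in_colour w = in_colour w' \<Longrightarrow> w = w'"
  using in_colour_bij[of v] unfolding bij_betw_def inj_on_def by auto

lemma in_colour_surj: "x \<in> colours v \<Longrightarrow> \<exists>w. E v w \<and> in_colour w = x"
  using in_colour_bij[of v] unfolding bij_betw_def by (metis imageE mem_Collect_eq)

lemma exists_adj: "\<exists>w. E v w"
proof -
  have "colours v \<noteq> {}" using X_nonempty Y_nonempty by (simp add: colours_def)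
  then show ?thesis using in_colour_surj by blast
qed

lemma VX_nonempty: "\<exists>u. u \<in> VX"
  using exists_adj adj_VX_iff_not_VX by blast

definition neighbour :: "'v \<Rightarrow> 'c \<Rightarrow> 'v" where
  "neighbour q x = (THE w. E q w \<and> in_colour w = x)"

lemma neighbour: "x \<in> colours q \<Longrightarrow> E q (neighbour q x) \<and> in_colour (neighbour q x) = x"
  unfolding neighbour_def by (rule theI') (use in_colour_surj in_colour_inj in blast)

lemma neighbour_in_colour: "E q w \<Longrightarrow> neighbour q (in_colour w) = w"
  using neighbour[OF in_colour_mem] in_colour_inj by blast

definition tree_dist :: "'v \<Rightarrow> 'v \<Rightarrow> nat" where
  "tree_dist b w = (LEAST n. (E ^^ n) b w)"

lemma tree_dist_path: "(E ^^ tree_dist b w) b w"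
  unfolding tree_dist_def using rtranclp_imp_relpowp[OF adj_connected] by (rule LeastI_ex)

lemma tree_dist_le: "(E ^^ n) b w \<Longrightarrow> tree_dist b w \<le> n"
  unfolding tree_dist_def by (rule Least_le)

lemma tree_dist_eq_0_iff: "tree_dist b w = 0 \<longleftrightarrow> w = b"
  using tree_dist_path[of b w] tree_dist_le[of 0 b w] by auto

lemma tree_dist_self [simp]: "tree_dist b b = 0"
  using tree_dist_eq_0_iff by simp

lemma tree_dist_adj_le: "E w w' \<Longrightarrow> tree_dist b w' \<le> Suc (tree_dist b w)"
  using tree_dist_le relpowp_Suc_I[OF tree_dist_path] by blast

lemma relpowp_adj_parity: "(E ^^ n) b w \<Longrightarrow> even n \<longleftrightarrow> (w \<in> VX \<longleftrightarrow> b \<in> VX)"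
proof (induction n arbitrary: w)
  case (Suc n)
  from Suc.prems obtain y where "(E ^^ n) b y" "E y w" by (rule relpowp_Suc_E)
  with Suc.IH[of y] adj_VX_iff_not_VX[of y w] show ?case by auto
qed simp

lemma tree_dist_adj: "E w w' \<Longrightarrow> tree_dist b w' = Suc (tree_dist b w) \<or> tree_dist b w = Suc (tree_dist b w')"
proof -
  assume e: "E w w'"
  have "tree_dist b w \<noteq> tree_dist b w'"
    using relpowp_adj_parity[OF tree_dist_path, of b w] relpowp_adj_parity[OF tree_dist_path, of b w']
      adj_VX_iff_not_VX[OF e] by auto
  with tree_dist_adj_le[of w w' b, OF e] tree_dist_adj_le[of w' w b, OF adj_sym[OF e]]
  show ?thesis by linarith
qed

lemma exists_parent: "w \<noteq> b \<Longrightarrow> \<exists>p. E p w \<and> Suc (tree_dist b p) = tree_dist b w"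
proof -
  assume "w \<noteq> b"
  then obtain n where n: "tree_dist b w = Suc n" using tree_dist_eq_0_iff not0_implies_Suc by blast
  with tree_dist_path[of b w] obtain y where y: "(E ^^ n) b y" "E y w"
    by (metis relpowp_Suc_E)
  then show ?thesis
    using n tree_dist_le[OF y(1)] tree_dist_adj_le[of y w b, OF y(2)] by (intro exI[of _ y]) auto
qed

definition parent :: "'v \<Rightarrow> 'v \<Rightarrow> 'v" where
  "parent b w = (SOME p. E p w \<and> Suc (tree_dist b p) = tree_dist b w)"

lemma parent: "w \<noteq> b \<Longrightarrow> E (parent b w) w \<and> Suc (tree_dist b (parent b w)) = tree_dist b w"
  unfolding parent_def by (rule someI_ex) (rule exists_parent)

lemma tree_dist_parent_less: "w \<noteq> b \<Longrightarrow> tree_dist b (parent b w) < tree_dist b w"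
  using parent by fastforce

lemma equidistant_path:
  "p \<noteq> q \<Longrightarrow> tree_dist b p = d \<Longrightarrow> tree_dist b q = d \<Longrightarrow>
   \<exists>xs. distinct xs \<and> successively E xs \<and> xs \<noteq> [] \<and> hd xs = p \<and> last xs = q
      \<and> length xs \<ge> 3 \<and> (\<forall>x\<in>set xs. tree_dist b x \<le> d)"
proof (induction d arbitrary: p q)
  case 0 then show ?case using tree_dist_eq_0_iff by auto
next
  case (Suc d)
  have pb: "p \<noteq> b" "q \<noteq> b" using Suc.prems tree_dist_eq_0_iff by auto
  define p' where "p' = parent b p"
  define q' where "q' = parent b q"
  have pp: "E p' p" "tree_dist b p' = d" using parent[OF pb(1)] Suc.prems unfolding p'_def by auto
  have qq: "E q' q" "tree_dist b q' = d" using parent[OF pb(2)] Suc.prems unfolding q'_def by auto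
  show ?case
  proof (cases "p' = q'")
    case True
    then show ?thesis using pp qq Suc.prems adj_sym by (intro exI[of _ "[p, p', q]"]) auto
  next
    case False
    from Suc.IH[OF False pp(2) qq(2)] obtain xs where xs: "distinct xs" "successively E xs"
      "xs \<noteq> []" "hd xs = p'" "last xs = q'" "length xs \<ge> 3" "\<forall>x\<in>set xs. tree_dist b x \<le> d"
      by blast
    have "p \<notin> set xs" "q \<notin> set xs" using xs(7) Suc.prems by fastforce+
    then show ?thesis using xs Suc.prems pp qq adj_sym
      by (intro exI[of _ "p # xs @ [q]"]) (auto simp: successively_append_iff successively_Cons)
  qed
qed

text \<open>Two distinct parents of \<open>w\<close> would close a cycle through \<open>w\<close> and a path joining them
  at distance at most theirs from \<open>b\<close>.\<close>

lemma parent_unique: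
  assumes "E p w" "E q w" "Suc (tree_dist b p) = tree_dist b w" "Suc (tree_dist b q) = tree_dist b w"
  shows "p = q"
proof (rule ccontr)
  assume "p \<noteq> q"
  from equidistant_path[OF this, of b "tree_dist b p"] assms obtain xs where xs:
    "distinct xs" "successively E xs" "xs \<noteq> []" "hd xs = p" "last xs = q"
    "length xs \<ge> 3" "\<forall>x\<in>set xs. tree_dist b x \<le> tree_dist b p" by auto
  have "w \<notin> set xs" using xs(7) assms(3) by fastforce
  then have "length (w # xs) \<ge> 3 \<and> distinct (w # xs)
      \<and> (\<forall>i. Suc i < length (w # xs) \<longrightarrow> E ((w # xs) ! i) ((w # xs) ! Suc i))
      \<and> E (last (w # xs)) (hd (w # xs))"
    using xs assms adj_sym successively_nth[of E "w # xs"] by (auto simp: successively_Cons)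
  then show False using no_cycle by blast
qed

lemma parent_eqI: "E p w \<Longrightarrow> Suc (tree_dist b p) = tree_dist b w \<Longrightarrow> parent b w = p"
  using parent_unique parent tree_dist_eq_0_iff by (metis Zero_not_Suc)

lemma adj_parent_cases:
  assumes "E q q'"
  shows "(q' \<noteq> b \<and> parent b q' = q) \<or> (q \<noteq> b \<and> parent b q = q')"
proof (cases "tree_dist b q' = Suc (tree_dist b q)")
  case True
  then show ?thesis using parent_eqI[OF assms] tree_dist_eq_0_iff by fastforce
next
  case False
  then have "tree_dist b q = Suc (tree_dist b q')" using tree_dist_adj[OF assms] by auto
  then show ?thesis using parent_eqI[OF adj_sym[OF assms]] tree_dist_eq_0_iff by fastforce
qed

end

section \<open>Automorphisms with prescribed local actions\<close>

locale box_data = coloured_tree E VX VY X Y c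
  for E :: "'v \<Rightarrow> 'v \<Rightarrow> bool" and VX VY :: "'v set" and X Y :: "'c set"
    and c :: "'v \<times> 'v \<Rightarrow> 'c" +
  fixes M N :: "('c \<Rightarrow> 'c) set"
  assumes M_subgroup: "perm_subgroup X M" and N_subgroup: "perm_subgroup Y N"
    and M_transitive: "transitive_on X M" and N_transitive: "transitive_on Y N"
begin

definition local_group :: "'v \<Rightarrow> ('c \<Rightarrow> 'c) set" where
  "local_group v = (if v \<in> VX then M else N)"

lemma perm_subgroup_local_group: "perm_subgroup (colours v) (local_group v)"
  using M_subgroup N_subgroup by (simp add: colours_def local_group_def)

lemma local_group_Sym: "local_group v \<subseteq> Sym (colours v)"
  using perm_subgroup_local_group unfolding perm_subgroup_def by blast

lemma local_group_permutes: "\<sigma> \<in> local_group v \<Longrightarrow> \<sigma> permutes colours v"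
  using local_group_Sym unfolding Sym_def by blast

lemma local_group_comp: "\<sigma> \<in> local_group v \<Longrightarrow> \<tau> \<in> local_group v \<Longrightarrow> \<sigma> \<circ> \<tau> \<in> local_group v"
  using perm_subgroup_local_group unfolding perm_subgroup_def by blast

lemma local_group_inv: "\<sigma> \<in> local_group v \<Longrightarrow> inv \<sigma> \<in> local_group v"
  using perm_subgroup_local_group unfolding perm_subgroup_def by blast

lemma local_group_id: "id \<in> local_group v"
  using perm_subgroup_local_group unfolding perm_subgroup_def by blast

lemma local_group_transitive: "x \<in> colours v \<Longrightarrow> y \<in> colours v \<Longrightarrow> \<exists>\<sigma>\<in>local_group v. \<sigma> x = y"
  using M_transitive N_transitive unfolding transitive_on_def colours_def local_group_def by auto

lemma local_group_mem: "\<sigma> \<in> local_group v \<Longrightarrow> x \<in> colours v \<Longrightarrow> \<sigma> x \<in> colours v"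
  using local_group_permutes permutes_in_image by fastforce

lemma local_group_inj: "\<sigma> \<in> local_group v \<Longrightarrow> \<sigma> x = \<sigma> y \<Longrightarrow> x = y"
  using local_group_permutes permutes_inj by (metis injD)

lemma local_group_surj: "\<sigma> \<in> local_group v \<Longrightarrow> y \<in> colours v \<Longrightarrow> \<exists>x\<in>colours v. \<sigma> x = y"
  using local_group_permutes permutes_image by (metis imageE)

lemma local_group_inv_apply: "\<sigma> \<in> local_group v \<Longrightarrow> \<sigma> (inv \<sigma> x) = x \<and> inv \<sigma> (\<sigma> x) = x"
  using local_group_permutes permutes_inverses by fastforce

lemma same_side_local: "(u \<in> VX \<longleftrightarrow> w \<in> VX) \<Longrightarrow> colours u = colours w \<and> local_group u = local_group w"
  by (simp add: colours_def local_group_def)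

definition transporter :: "'v \<Rightarrow> 'c \<Rightarrow> 'c \<Rightarrow> 'c \<Rightarrow> 'c" where
  "transporter v x y = (SOME \<sigma>. \<sigma> \<in> local_group v \<and> \<sigma> x = y)"

lemma transporter:
  "x \<in> colours v \<Longrightarrow> y \<in> colours v \<Longrightarrow> transporter v x y \<in> local_group v \<and> transporter v x y x = y"
proof -
  assume "x \<in> colours v" "y \<in> colours v"
  then have "\<exists>\<sigma>. \<sigma> \<in> local_group v \<and> \<sigma> x = y" using local_group_transitive by blast
  then show ?thesis unfolding transporter_def by (rule someI_ex)
qed

text \<open>Parameters for an automorphism fixing the root \<open>b\<close>: its local action \<open>\<rho> b\<close> at \<open>b\<close>, and at
  every other vertex \<open>p\<close> a local permutation \<open>\<rho> p\<close> fixing the colour of the arc towards \<open>b\<close>.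
  The automorphism is built outwards from \<open>b\<close>: once \<open>p\<close> is sent to \<open>h p\<close>, its children are
  placed by \<open>local_map\<close>, which is \<open>\<rho> p\<close> followed by a fixed permutation matching the colour of
  the arc to the parent of \<open>p\<close> with that of its image.\<close>

definition admissible :: "'v \<Rightarrow> ('v \<Rightarrow> 'c \<Rightarrow> 'c) \<Rightarrow> bool" where
  "admissible b \<rho> \<longleftrightarrow> \<rho> b \<in> local_group b \<and>
     (\<forall>p. p \<noteq> b \<longrightarrow> \<rho> p \<in> local_group p \<and> \<rho> p (in_colour (parent b p)) = in_colour (parent b p))"

definition local_map :: "'v \<Rightarrow> ('v \<Rightarrow> 'c \<Rightarrow> 'c) \<Rightarrow> ('v \<Rightarrow> 'v) \<Rightarrow> 'v \<Rightarrow> 'c \<Rightarrow> 'c" where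
  "local_map b \<rho> h p = (if p = b then \<rho> b
     else transporter p (in_colour (parent b p)) (in_colour (h (parent b p))) \<circ> \<rho> p)"

definition extend_step :: "'v \<Rightarrow> ('v \<Rightarrow> 'c \<Rightarrow> 'c) \<Rightarrow> ('v \<Rightarrow> 'v) \<Rightarrow> 'v \<Rightarrow> 'v" where
  "extend_step b \<rho> h w = (if w = b then b
     else neighbour (h (parent b w)) (local_map b \<rho> h (parent b w) (in_colour w)))"

text \<open>The recursion along parents is encoded by iterating \<open>extend_step\<close>; after \<open>n\<close> steps
  the iterate is stable on the ball of radius \<open>n\<close> about \<open>b\<close>.\<close>

definition aut_of :: "'v \<Rightarrow> ('v \<Rightarrow> 'c \<Rightarrow> 'c) \<Rightarrow> 'v \<Rightarrow> 'v" where
  "aut_of b \<rho> w = ((extend_step b \<rho> ^^ tree_dist b w) (\<lambda>_. b)) w"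

lemma extend_step_cong:
  assumes "w \<noteq> b \<Longrightarrow> h (parent b w) = h' (parent b w)"
    and "w \<noteq> b \<Longrightarrow> parent b w \<noteq> b \<Longrightarrow> h (parent b (parent b w)) = h' (parent b (parent b w))"
  shows "extend_step b \<rho> h w = extend_step b \<rho> h' w"
  using assms unfolding extend_step_def local_map_def by auto

lemma extend_step_iterate_stable:
  "tree_dist b w \<le> n \<Longrightarrow>
     (extend_step b \<rho> ^^ Suc n) (\<lambda>_. b) w = (extend_step b \<rho> ^^ n) (\<lambda>_. b) w"
proof (induction n arbitrary: w)
  case 0 then show ?case by (simp add: tree_dist_eq_0_iff extend_step_def)
next
  case (Suc n)
  show ?case
  proof (cases "w = b")
    case True then show ?thesis by (simp add: extend_step_def)
  next
    case False
    have 1: "tree_dist b (parent b w) \<le> n" using parent[OF False] Suc.prems by auto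
    have 2: "tree_dist b (parent b (parent b w)) \<le> n" if "parent b w \<noteq> b"
      using tree_dist_parent_less[OF that] 1 by auto
    have "(extend_step b \<rho> ^^ Suc (Suc n)) (\<lambda>_. b) w
        = extend_step b \<rho> ((extend_step b \<rho> ^^ Suc n) (\<lambda>_. b)) w"
      by simp
    also have "\<dots> = extend_step b \<rho> ((extend_step b \<rho> ^^ n) (\<lambda>_. b)) w"
      by (rule extend_step_cong) (use Suc.IH[OF 1] Suc.IH[OF 2] in auto)
    finally show ?thesis by simp
  qed
qed

lemma extend_step_iterate_eq_aut_of:
  "tree_dist b w \<le> n \<Longrightarrow> (extend_step b \<rho> ^^ n) (\<lambda>_. b) w = aut_of b \<rho> w"
proof (induction n)
  case 0 then show ?case by (simp add: aut_of_def)
next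
  case (Suc n)
  show ?case
  proof (cases "tree_dist b w = Suc n")
    case True then show ?thesis by (simp add: aut_of_def)
  next
    case False
    then have "tree_dist b w \<le> n" using Suc.prems by auto
    then show ?thesis using extend_step_iterate_stable Suc.IH by metis
  qed
qed

lemma aut_of_root [simp]: "aut_of b \<rho> b = b"
  by (simp add: aut_of_def)

lemma aut_of_unfold: "w \<noteq> b \<Longrightarrow> aut_of b \<rho> w = extend_step b \<rho> (aut_of b \<rho>) w"
proof -
  assume wb: "w \<noteq> b"
  then obtain m where m: "tree_dist b w = Suc m" using tree_dist_eq_0_iff not0_implies_Suc by blast
  have 1: "tree_dist b (parent b w) \<le> m" using parent[OF wb] m by auto
  have 2: "tree_dist b (parent b (parent b w)) \<le> m" if "parent b w \<noteq> b"
    using tree_dist_parent_less[OF that] 1 by auto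
  have "aut_of b \<rho> w = extend_step b \<rho> ((extend_step b \<rho> ^^ m) (\<lambda>_. b)) w"
    by (simp add: aut_of_def m)
  also have "\<dots> = extend_step b \<rho> (aut_of b \<rho>) w"
    by (rule extend_step_cong) (use extend_step_iterate_eq_aut_of 1 2 in auto)
  finally show ?thesis .
qed

lemma aut_of_step:
  "w \<noteq> b \<Longrightarrow>
     aut_of b \<rho> w = neighbour (aut_of b \<rho> (parent b w)) (local_map b \<rho> (aut_of b \<rho>) (parent b w) (in_colour w))"
  using aut_of_unfold by (simp add: extend_step_def)

context
  fixes b :: 'v and \<rho> :: "'v \<Rightarrow> 'c \<Rightarrow> 'c"
  assumes adm: "admissible b \<rho>"
begin

definition aut_of_invariant :: "'v \<Rightarrow> bool" where
  "aut_of_invariant w \<longleftrightarrow> (aut_of b \<rho> w \<in> VX \<longleftrightarrow> w \<in> VX) \<and> (w \<noteq> b \<longrightarrow>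
      E (aut_of b \<rho> (parent b w)) (aut_of b \<rho> w)
      \<and> in_colour (aut_of b \<rho> w) = local_map b \<rho> (aut_of b \<rho>) (parent b w) (in_colour w)
      \<and> aut_of b \<rho> w \<noteq> b \<and> parent b (aut_of b \<rho> w) = aut_of b \<rho> (parent b w)
      \<and> tree_dist b (aut_of b \<rho> w) = tree_dist b w)"

lemma local_map_props:
  assumes "aut_of_invariant p"
  shows "local_map b \<rho> (aut_of b \<rho>) p \<in> local_group p \<and> (p \<noteq> b \<longrightarrow>
     local_map b \<rho> (aut_of b \<rho>) p (in_colour (parent b p)) = in_colour (aut_of b \<rho> (parent b p)))"
proof (cases "p = b")
  case True then show ?thesis using adm by (auto simp: local_map_def admissible_def)
next
  case False
  have e: "E (aut_of b \<rho> p) (aut_of b \<rho> (parent b p))"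
    using assms False adj_sym unfolding aut_of_invariant_def by blast
  have cs: "colours (aut_of b \<rho> p) = colours p"
    using assms same_side_local unfolding aut_of_invariant_def by blast
  have k1: "in_colour (parent b p) \<in> colours p"
    using in_colour_mem[OF adj_sym] parent[OF False] by blast
  have k2: "in_colour (aut_of b \<rho> (parent b p)) \<in> colours p"
    using in_colour_mem[OF e] cs by simp
  have "\<rho> p \<in> local_group p" "\<rho> p (in_colour (parent b p)) = in_colour (parent b p)"
    using adm False by (auto simp: admissible_def)
  then show ?thesis using transporter[OF k1 k2] False local_group_comp by (simp add: local_map_def)
qed

lemma aut_of_invariant_holds: "aut_of_invariant w"
proof (induction "tree_dist b w" arbitrary: w rule: less_induct)
  case less
  show ?case
  proof (cases "w = b")
    case True then show ?thesis by (simp add: aut_of_invariant_def)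
  next
    case False
    define p where "p = parent b w"
    define g where "g = aut_of b \<rho>"
    define \<sigma> where "\<sigma> = local_map b \<rho> g p"
    have ep: "E p w" "Suc (tree_dist b p) = tree_dist b w" using parent[OF False] unfolding p_def by auto
    have Pp: "aut_of_invariant p" using less ep by auto
    have sg: "\<sigma> \<in> local_group p" "p \<noteq> b \<Longrightarrow> \<sigma> (in_colour (parent b p)) = in_colour (g (parent b p))"
      using local_map_props[OF Pp] unfolding \<sigma>_def g_def by auto
    have cs: "colours (g p) = colours p" "g p \<in> VX \<longleftrightarrow> p \<in> VX"
      using Pp same_side_local unfolding aut_of_invariant_def g_def by blast+
    have "\<sigma> (in_colour w) \<in> colours (g p)"
      using local_group_mem[OF sg(1) in_colour_mem[OF ep(1)]] cs by simp
    moreover have "g w = neighbour (g p) (\<sigma> (in_colour w))"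
      using aut_of_step[OF False] unfolding g_def p_def \<sigma>_def by simp
    ultimately have E1: "E (g p) (g w)" and K1: "in_colour (g w) = \<sigma> (in_colour w)"
      using neighbour by auto
    have side: "g w \<in> VX \<longleftrightarrow> w \<in> VX"
      using adj_VX_iff_not_VX[OF E1] adj_VX_iff_not_VX[OF ep(1)] cs by auto
    txt \<open>\<open>g w\<close> cannot be the parent of \<open>g p\<close>: that is \<open>g (parent b p)\<close>, reached along a
      different colour.\<close>
    have pg: "g w \<noteq> b \<and> parent b (g w) = g p"
    proof -
      { assume a: "g p \<noteq> b" "parent b (g p) = g w"
        then have pb: "p \<noteq> b" by (auto simp: g_def)
        then have "parent b (g p) = g (parent b p)" using Pp unfolding aut_of_invariant_def g_def by blast
        with a have "in_colour (g w) = in_colour (g (parent b p))" by simp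
        then have "\<sigma> (in_colour w) = \<sigma> (in_colour (parent b p))" using K1 sg(2)[OF pb] by simp
        then have "in_colour w = in_colour (parent b p)" using local_group_inj[OF sg(1)] by blast
        then have "w = parent b p" using in_colour_inj[OF ep(1) adj_sym] parent[OF pb] by blast
        then have False using parent[OF pb] ep by auto }
      then show ?thesis using adj_parent_cases[OF E1] by blast
    qed
    have "tree_dist b (g p) = tree_dist b p"
      using Pp unfolding aut_of_invariant_def g_def by (cases "p = b") auto
    then have "tree_dist b (g w) = tree_dist b w"
      using parent[of "g w" b] pg ep by auto
    then show ?thesis unfolding aut_of_invariant_def
      using False side E1 K1 pg unfolding g_def p_def \<sigma>_def by simp
  qed
qed

lemma local_map_in_local_group: "local_map b \<rho> (aut_of b \<rho>) p \<in> local_group p"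
  using local_map_props[OF aut_of_invariant_holds] by blast

lemma aut_of_adj_local:
  "E p w \<Longrightarrow> E (aut_of b \<rho> p) (aut_of b \<rho> w)
     \<and> in_colour (aut_of b \<rho> w) = local_map b \<rho> (aut_of b \<rho>) p (in_colour w)"
proof -
  assume e: "E p w"
  show ?thesis
  proof (cases "w \<noteq> b \<and> parent b w = p")
    case True then show ?thesis using aut_of_invariant_holds[of w] unfolding aut_of_invariant_def by auto
  next
    case False
    then have "p \<noteq> b" "parent b p = w" using adj_parent_cases[OF e] by auto
    then show ?thesis
      using aut_of_invariant_holds[of p] local_map_props[OF aut_of_invariant_holds[of p]] adj_sym
      unfolding aut_of_invariant_def by auto
  qed
qed

lemma aut_of_VX_iff: "aut_of b \<rho> w \<in> VX \<longleftrightarrow> w \<in> VX"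
  using aut_of_invariant_holds unfolding aut_of_invariant_def by blast

lemma tree_dist_aut_of: "tree_dist b (aut_of b \<rho> w) = tree_dist b w"
  using aut_of_invariant_holds[of w] unfolding aut_of_invariant_def by (cases "w = b") auto

lemma parent_aut_of: "w \<noteq> b \<Longrightarrow> parent b (aut_of b \<rho> w) = aut_of b \<rho> (parent b w)"
  using aut_of_invariant_holds[of w] unfolding aut_of_invariant_def by auto

lemma aut_of_inj: "aut_of b \<rho> w = aut_of b \<rho> w' \<Longrightarrow> w = w'"
proof (induction "tree_dist b w" arbitrary: w w' rule: less_induct)
  case less
  have dd: "tree_dist b w = tree_dist b w'" using tree_dist_aut_of less.prems by metis
  show ?case
  proof (cases "w = b")
    case True then show ?thesis using dd tree_dist_eq_0_iff by auto
  next
    case False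
    then have w'b: "w' \<noteq> b" using dd tree_dist_eq_0_iff by auto
    have "aut_of b \<rho> (parent b w) = aut_of b \<rho> (parent b w')"
      using parent_aut_of[OF False] parent_aut_of[OF w'b] less.prems by metis
    then have pp: "parent b w = parent b w'" using less.hyps tree_dist_parent_less[OF False] by blast
    have "local_map b \<rho> (aut_of b \<rho>) (parent b w) (in_colour w)
        = local_map b \<rho> (aut_of b \<rho>) (parent b w) (in_colour w')"
      using aut_of_adj_local[OF conjunct1[OF parent[OF False]]]
        aut_of_adj_local[OF conjunct1[OF parent[OF w'b]]] pp less.prems by metis
    then have "in_colour w = in_colour w'" using local_group_inj local_map_in_local_group by blast
    then show ?thesis using in_colour_inj parent[OF False] parent[OF w'b] pp by metis
  qed
qed

lemma aut_of_adj_surj: "E (aut_of b \<rho> x) y \<Longrightarrow> \<exists>w. E x w \<and> aut_of b \<rho> w = y"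
proof -
  assume e: "E (aut_of b \<rho> x) y"
  have "colours (aut_of b \<rho> x) = colours x" using aut_of_VX_iff same_side_local by blast
  then have "in_colour y \<in> colours x" using in_colour_mem[OF e] by simp
  then obtain z where z: "z \<in> colours x" "local_map b \<rho> (aut_of b \<rho>) x z = in_colour y"
    using local_group_surj local_map_in_local_group by blast
  define w where "w = neighbour x z"
  have w: "E x w" "in_colour w = z" using neighbour[OF z(1)] unfolding w_def by auto
  have "E (aut_of b \<rho> x) (aut_of b \<rho> w)" "in_colour (aut_of b \<rho> w) = in_colour y"
    using aut_of_adj_local[OF w(1)] w z by auto
  then show ?thesis using in_colour_inj e w by blast
qed

lemma aut_of_surj: "\<exists>w. aut_of b \<rho> w = y"
proof (induction "tree_dist b y" arbitrary: y rule: less_induct)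
  case less
  show ?case
  proof (cases "y = b")
    case True then show ?thesis by (intro exI[of _ b]) simp
  next
    case False
    obtain x where "aut_of b \<rho> x = parent b y" using less tree_dist_parent_less[OF False] by blast
    then have "E (aut_of b \<rho> x) y" using parent[OF False] by simp
    then show ?thesis using aut_of_adj_surj by blast
  qed
qed

lemma bij_aut_of: "bij (aut_of b \<rho>)"
  unfolding bij_def inj_def surj_def using aut_of_inj aut_of_surj by metis

lemma aut_of_adj_iff: "E u w \<longleftrightarrow> E (aut_of b \<rho> u) (aut_of b \<rho> w)"
  using aut_of_adj_local aut_of_adj_surj aut_of_inj by metis

end

abbreviation U :: "('v \<Rightarrow> 'v) set" where
  "U \<equiv> U_c E VX VY c M N"

lemma local_action_in_iff:
  "(\<forall>w. E v w \<longrightarrow> E (g v) (g w)) \<Longrightarrow>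
     local_action_in E c L g v \<longleftrightarrow> (\<exists>\<sigma>\<in>L. \<forall>w. E v w \<longrightarrow> in_colour (g w) = \<sigma> (in_colour w))"
  unfolding local_action_in_def by (simp add: arc_colour_eq_in_colour)

lemma U_cI:
  assumes "bij g" "\<And>u w. E u w \<longleftrightarrow> E (g u) (g w)" "\<And>v. g v \<in> VX \<longleftrightarrow> v \<in> VX"
    "\<And>v. \<exists>\<sigma>\<in>local_group v. \<forall>w. E v w \<longrightarrow> in_colour (g w) = \<sigma> (in_colour w)"
  shows "g \<in> U"
proof -
  have "g ` VX = VX"
  proof
    show "g ` VX \<subseteq> VX" using assms(3) by blast
    show "VX \<subseteq> g ` VX"
    proof
      fix x assume x: "x \<in> VX"
      obtain y where "x = g y" using bij_is_surj[OF assms(1)] by (metis surjD)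
      then show "x \<in> g ` VX" using assms(3) x by blast
    qed
  qed
  moreover have "local_action_in E c (local_group v) g v" for v
  proof -
    have "\<forall>w. E v w \<longrightarrow> E (g v) (g w)" using assms(2) by blast
    from local_action_in_iff[OF this, of "local_group v"] show ?thesis using assms(4)[of v] by blast
  qed
  then have "(\<forall>v\<in>VX. local_action_in E c M g v) \<and> (\<forall>v\<in>VY. local_action_in E c N g v)"
    using not_VX_iff_VY unfolding local_group_def by (metis (full_types))
  moreover have "g \<in> tree_aut E" unfolding tree_aut_def using assms(1,2) by blast
  ultimately show ?thesis unfolding U_c_def by blast
qed

lemma bij_U: "g \<in> U \<Longrightarrow> bij g"
  unfolding U_c_def tree_aut_def by blast

lemma U_adj_iff: "g \<in> U \<Longrightarrow> E u w \<longleftrightarrow> E (g u) (g w)"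
  unfolding U_c_def tree_aut_def by blast

lemma U_inv_apply: "g \<in> U \<Longrightarrow> g (inv g x) = x \<and> inv g (g x) = x"
  using bij_U[of g] by (simp add: bij_is_surj surj_f_inv_f bij_is_inj inv_f_f)

lemma U_VX_iff: "g \<in> U \<Longrightarrow> g v \<in> VX \<longleftrightarrow> v \<in> VX"
proof -
  assume g: "g \<in> U"
  then have "inj g" "g ` VX = VX" using bij_U unfolding U_c_def bij_def by auto
  then show ?thesis by (metis inj_image_mem_iff)
qed

lemma U_VY_iff: "g \<in> U \<Longrightarrow> g v \<in> VY \<longleftrightarrow> v \<in> VY"
  using U_VX_iff not_VX_iff_VY by blast

lemma U_local_group: "g \<in> U \<Longrightarrow> local_group (g v) = local_group v \<and> colours (g v) = colours v"
  using U_VX_iff same_side_local by blast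

lemma U_local_action:
  assumes "g \<in> U"
  shows "\<exists>\<sigma>\<in>local_group v. \<forall>w. E v w \<longrightarrow> in_colour (g w) = \<sigma> (in_colour w)"
proof -
  have "local_action_in E c (local_group v) g v"
    using assms not_VX_iff_VY[of v] unfolding U_c_def local_group_def by (cases "v \<in> VX") auto
  then show ?thesis using local_action_in_iff[of v g] U_adj_iff[OF assms] by blast
qed

lemma U_comp: "g \<in> U \<Longrightarrow> h \<in> U \<Longrightarrow> g \<circ> h \<in> U"
proof (rule U_cI)
  assume g: "g \<in> U" and h: "h \<in> U"
  show "bij (g \<circ> h)" using bij_U[OF g] bij_U[OF h] by (rule bij_comp[rotated])
  show "E u w \<longleftrightarrow> E ((g \<circ> h) u) ((g \<circ> h) w)" for u w using U_adj_iff[OF g] U_adj_iff[OF h] by simp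
  show "(g \<circ> h) v \<in> VX \<longleftrightarrow> v \<in> VX" for v using U_VX_iff[OF g] U_VX_iff[OF h] by simp
  show "\<exists>\<sigma>\<in>local_group v. \<forall>w. E v w \<longrightarrow> in_colour ((g \<circ> h) w) = \<sigma> (in_colour w)" for v
  proof -
    obtain \<sigma> where s: "\<sigma> \<in> local_group v" "\<forall>w. E v w \<longrightarrow> in_colour (h w) = \<sigma> (in_colour w)"
      using U_local_action[OF h] by blast
    obtain \<tau> where t: "\<tau> \<in> local_group (h v)" "\<forall>w. E (h v) w \<longrightarrow> in_colour (g w) = \<tau> (in_colour w)"
      using U_local_action[OF g] by blast
    have "\<tau> \<circ> \<sigma> \<in> local_group v" using local_group_comp[OF _ s(1)] t(1) U_local_group[OF h] by simp
    moreover have "\<forall>w. E v w \<longrightarrow> in_colour ((g \<circ> h) w) = (\<tau> \<circ> \<sigma>) (in_colour w)"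
      using s t U_adj_iff[OF h] by auto
    ultimately show ?thesis by blast
  qed
qed

lemma U_inv: "g \<in> U \<Longrightarrow> inv g \<in> U"
proof (rule U_cI)
  assume g: "g \<in> U"
  note gi = U_inv_apply[OF g]
  show "bij (inv g)" using bij_U[OF g] by (rule bij_imp_bij_inv)
  show "E u w \<longleftrightarrow> E (inv g u) (inv g w)" for u w using U_adj_iff[OF g, of "inv g u" "inv g w"] gi by simp
  show "inv g v \<in> VX \<longleftrightarrow> v \<in> VX" for v using U_VX_iff[OF g, of "inv g v"] gi by simp
  show "\<exists>\<sigma>\<in>local_group v. \<forall>w. E v w \<longrightarrow> in_colour (inv g w) = \<sigma> (in_colour w)" for v
  proof -
    obtain \<sigma> where s: "\<sigma> \<in> local_group (inv g v)"
      "\<forall>w. E (inv g v) w \<longrightarrow> in_colour (g w) = \<sigma> (in_colour w)"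
      using U_local_action[OF g] by blast
    have sg: "\<sigma> \<in> local_group v" using s(1) U_local_group[OF g, of "inv g v"] gi by simp
    have "in_colour (inv g w) = inv \<sigma> (in_colour w)" if "E v w" for w
    proof -
      have "E (inv g v) (inv g w)" using that U_adj_iff[OF g, of "inv g v" "inv g w"] gi by simp
      then have "in_colour w = \<sigma> (in_colour (inv g w))" using s(2) gi by metis
      then show ?thesis using local_group_inv_apply[OF sg] by simp
    qed
    then show ?thesis using local_group_inv[OF sg] by blast
  qed
qed

lemma U_id: "id \<in> U"
  by (rule U_cI) (auto intro: bexI[of _ id] local_group_id)

lemma aut_of_in_U:
  assumes "admissible b \<rho>"
  shows "aut_of b \<rho> \<in> U"
proof (rule U_cI)
  show "bij (aut_of b \<rho>)" using bij_aut_of[OF assms] .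
  show "E u w \<longleftrightarrow> E (aut_of b \<rho> u) (aut_of b \<rho> w)" for u w using aut_of_adj_iff[OF assms] .
  show "aut_of b \<rho> v \<in> VX \<longleftrightarrow> v \<in> VX" for v using aut_of_VX_iff[OF assms] .
  show "\<exists>\<sigma>\<in>local_group v. \<forall>w. E v w \<longrightarrow> in_colour (aut_of b \<rho> w) = \<sigma> (in_colour w)" for v
    using local_map_in_local_group[OF assms] aut_of_adj_local[OF assms] by blast
qed

lemma aut_of_local_action_root:
  "admissible b \<rho> \<Longrightarrow> E b w \<Longrightarrow> in_colour (aut_of b \<rho> w) = \<rho> b (in_colour w)"
  using aut_of_adj_local[of b \<rho> b w] by (simp add: local_map_def)

definition local_stab :: "'v \<Rightarrow> ('c \<Rightarrow> 'c) set \<Rightarrow> ('v \<Rightarrow> 'v) set" where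
  "local_stab b C = {h \<in> U. h b = b \<and> (\<exists>\<pi>\<in>C. \<forall>w. E b w \<longrightarrow> in_colour (h w) = \<pi> (in_colour w))}"

lemma aut_of_in_local_stab: "admissible b \<rho> \<Longrightarrow> \<rho> b \<in> C \<Longrightarrow> aut_of b \<rho> \<in> local_stab b C"
  unfolding local_stab_def using aut_of_in_U aut_of_local_action_root by auto

lemma local_stab_nonempty: "\<pi> \<in> local_group b \<Longrightarrow> local_stab b {\<pi>} \<noteq> {}"
proof -
  assume "\<pi> \<in> local_group b"
  then have "admissible b (\<lambda>p. if p = b then \<pi> else id)"
    unfolding admissible_def using local_group_id by simp
  then show ?thesis using aut_of_in_local_stab by fastforce
qed

definition local_action :: "('v \<Rightarrow> 'v) \<Rightarrow> 'v \<Rightarrow> 'c \<Rightarrow> 'c" where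
  "local_action h p = (SOME \<sigma>. \<sigma> \<in> local_group p \<and> (\<forall>w. E p w \<longrightarrow> in_colour (h w) = \<sigma> (in_colour w)))"

lemma local_action:
  "h \<in> U \<Longrightarrow> local_action h p \<in> local_group p \<and> (\<forall>w. E p w \<longrightarrow> in_colour (h w) = local_action h p (in_colour w))"
proof -
  assume "h \<in> U"
  then have "\<exists>\<sigma>. \<sigma> \<in> local_group p \<and> (\<forall>w. E p w \<longrightarrow> in_colour (h w) = \<sigma> (in_colour w))"
    using U_local_action by blast
  then show ?thesis unfolding local_action_def by (rule someI_ex)
qed

text \<open>Inverse of the parametrisation: away from \<open>b\<close>, undo the transporter from the local
  action of \<open>h\<close>.\<close>

definition params_of :: "'v \<Rightarrow> ('c \<Rightarrow> 'c) \<Rightarrow> ('v \<Rightarrow> 'v) \<Rightarrow> 'v \<Rightarrow> 'c \<Rightarrow> 'c" where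
  "params_of b \<pi> h p = (if p = b then \<pi>
     else inv (transporter p (in_colour (parent b p)) (in_colour (h (parent b p)))) \<circ> local_action h p)"

lemma transporter_parent:
  assumes "h \<in> U" "p \<noteq> b"
  defines "s \<equiv> transporter p (in_colour (parent b p)) (in_colour (h (parent b p)))"
  shows "s \<in> local_group p \<and> s (in_colour (parent b p)) = in_colour (h (parent b p))"
proof -
  have e: "E p (parent b p)" using parent[OF assms(2)] adj_sym by blast
  then have "in_colour (h (parent b p)) \<in> colours (h p)" using U_adj_iff[OF assms(1)] in_colour_mem by blast
  then show ?thesis unfolding s_def using transporter[OF in_colour_mem[OF e]] U_local_group[OF assms(1)] by simp
qed

lemma admissible_params_of:
  assumes "h \<in> U" "\<pi> \<in> local_group b"
  shows "admissible b (params_of b \<pi> h)"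
  unfolding admissible_def
proof (intro conjI allI impI)
  show "params_of b \<pi> h b \<in> local_group b" using assms(2) by (simp add: params_of_def)
  fix p assume pb: "p \<noteq> b"
  note s = transporter_parent[OF assms(1) pb]
  show "params_of b \<pi> h p \<in> local_group p"
    using pb local_group_comp local_group_inv s local_action[OF assms(1)] by (simp add: params_of_def)
  have "E p (parent b p)" using parent[OF pb] adj_sym by blast
  then show "params_of b \<pi> h p (in_colour (parent b p)) = in_colour (parent b p)"
    using pb local_action[OF assms(1)] s local_group_inv_apply by (simp add: params_of_def) metis
qed

lemma aut_of_params_of:
  assumes h: "h \<in> U" "h b = b" and \<pi>: "\<pi> \<in> local_group b" "\<forall>w. E b w \<longrightarrow> in_colour (h w) = \<pi> (in_colour w)"
  shows "aut_of b (params_of b \<pi> h) w = h w"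
proof (induction "tree_dist b w" arbitrary: w rule: less_induct)
  case less
  let ?\<rho> = "params_of b \<pi> h"
  note adm = admissible_params_of[OF h(1) \<pi>(1)]
  show ?case
  proof (cases "w = b")
    case True then show ?thesis using h by simp
  next
    case False
    define p where "p = parent b w"
    have ep: "E p w" using parent[OF False] unfolding p_def by blast
    have IHp: "aut_of b ?\<rho> p = h p" using less tree_dist_parent_less[OF False] unfolding p_def by blast
    have "local_map b ?\<rho> (aut_of b ?\<rho>) p (in_colour w) = in_colour (h w)"
    proof (cases "p = b")
      case True then show ?thesis using \<pi> ep by (simp add: local_map_def params_of_def)
    next
      case pb: False
      have "tree_dist b (parent b p) < tree_dist b w"
        using tree_dist_parent_less[OF pb] tree_dist_parent_less[OF False] unfolding p_def by linarith
      then have "aut_of b ?\<rho> (parent b p) = h (parent b p)" using less by blast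
      then show ?thesis
        using pb local_group_inv_apply[OF conjunct1[OF transporter_parent[OF h(1) pb]]]
          local_action[OF h(1)] ep
        by (simp add: local_map_def params_of_def)
    qed
    then show ?thesis
      using aut_of_step[OF False, of ?\<rho>] IHp neighbour_in_colour U_adj_iff[OF h(1)] ep
      unfolding p_def by metis
  qed
qed

lemma local_stab_eq_image:
  assumes "C \<subseteq> local_group b"
  shows "local_stab b C = aut_of b ` {\<rho>. admissible b \<rho> \<and> \<rho> b \<in> C}"
proof
  show "aut_of b ` {\<rho>. admissible b \<rho> \<and> \<rho> b \<in> C} \<subseteq> local_stab b C"
    using aut_of_in_local_stab by blast
  show "local_stab b C \<subseteq> aut_of b ` {\<rho>. admissible b \<rho> \<and> \<rho> b \<in> C}"
  proof
    fix h assume "h \<in> local_stab b C"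
    then obtain \<pi> where h: "h \<in> U" "h b = b" and \<pi>: "\<pi> \<in> C" "\<forall>w. E b w \<longrightarrow> in_colour (h w) = \<pi> (in_colour w)"
      unfolding local_stab_def by blast
    have "\<pi> \<in> local_group b" using \<pi>(1) assms by blast
    then have "admissible b (params_of b \<pi> h)" "aut_of b (params_of b \<pi> h) = h"
      using admissible_params_of[OF h(1)] aut_of_params_of[OF h _ \<pi>(2)] by auto
    moreover have "params_of b \<pi> h b \<in> C" using \<pi>(1) by (simp add: params_of_def)
    ultimately show "h \<in> aut_of b ` {\<rho>. admissible b \<rho> \<and> \<rho> b \<in> C}"
      by (intro image_eqI[where x = "params_of b \<pi> h"]) simp_all
  qed
qed

lemma aut_of_finitely_determined:
  "\<exists>D. finite D \<and> (\<forall>\<rho>'. (\<forall>(p,x)\<in>D. \<rho>' p x = \<rho> p x) \<longrightarrow> aut_of b \<rho>' w = aut_of b \<rho> w)"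
proof (induction "tree_dist b w" arbitrary: w rule: less_induct)
  case less
  show ?case
  proof (cases "w = b")
    case True then show ?thesis by (intro exI[of _ "{}"]) simp
  next
    case wb: False
    define p where "p = parent b w"
    have dp: "tree_dist b p < tree_dist b w" using tree_dist_parent_less[OF wb] unfolding p_def .
    obtain D1 where D1: "finite D1" "\<forall>\<rho>'. (\<forall>(p,x)\<in>D1. \<rho>' p x = \<rho> p x) \<longrightarrow> aut_of b \<rho>' p = aut_of b \<rho> p"
      using less dp by blast
    obtain D2 where D2: "finite D2" "p \<noteq> b \<Longrightarrow>
        \<forall>\<rho>'. (\<forall>(p,x)\<in>D2. \<rho>' p x = \<rho> p x) \<longrightarrow> aut_of b \<rho>' (parent b p) = aut_of b \<rho> (parent b p)"
    proof (cases "p = b")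
      case True then show ?thesis using that[of "{}"] by simp
    next
      case False
      have "tree_dist b (parent b p) < tree_dist b w" using tree_dist_parent_less[OF False] dp by linarith
      then show ?thesis using less that by blast
    qed
    show ?thesis
    proof (intro exI[of _ "D1 \<union> D2 \<union> {(p, in_colour w)}"] conjI allI impI)
      show "finite (D1 \<union> D2 \<union> {(p, in_colour w)})" using D1 D2 by simp
      fix \<rho>' assume a: "\<forall>(p,x)\<in>D1 \<union> D2 \<union> {(p, in_colour w)}. \<rho>' p x = \<rho> p x"
      have 1: "aut_of b \<rho>' p = aut_of b \<rho> p" using D1 a by blast
      have 2: "p \<noteq> b \<Longrightarrow> aut_of b \<rho>' (parent b p) = aut_of b \<rho> (parent b p)" using D2 a by blast
      have 3: "\<rho>' p (in_colour w) = \<rho> p (in_colour w)" using a by blast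
      have "local_map b \<rho>' (aut_of b \<rho>') p (in_colour w) = local_map b \<rho> (aut_of b \<rho>) p (in_colour w)"
        using 2 3 by (cases "p = b") (simp_all add: local_map_def)
      then show "aut_of b \<rho>' w = aut_of b \<rho> w"
        using aut_of_step[OF wb, of \<rho>] aut_of_step[OF wb, of \<rho>'] 1 unfolding p_def by simp
    qed
  qed
qed

section \<open>Compactness of the vertex stabilisers\<close>

definition on_VY :: "('v \<Rightarrow> 'v) \<Rightarrow> 'v \<Rightarrow> 'v" where
  "on_VY g = (\<lambda>v. if v \<in> VY then g v else v)"

lemma box_product_eq: "box_product E VX VY c M N = on_VY ` U"
  unfolding box_product_def on_VY_def by simp

lemma on_VY_Sym: "g \<in> U \<Longrightarrow> on_VY g \<in> Sym VY"
proof -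
  assume g: "g \<in> U"
  have "g ` VY = VY"
  proof
    show "g ` VY \<subseteq> VY" using U_VY_iff[OF g] by blast
    show "VY \<subseteq> g ` VY"
    proof
      fix y assume y: "y \<in> VY"
      obtain x where "y = g x" using bij_is_surj[OF bij_U[OF g]] by (metis surjD)
      then show "y \<in> g ` VY" using U_VY_iff[OF g] y by blast
    qed
  qed
  then have "bij_betw g VY VY"
    using bij_is_inj[OF bij_U[OF g]] inj_on_subset[of g UNIV VY] unfolding bij_betw_def by simp
  then have "bij_betw (on_VY g) VY VY"
    by (rule bij_betw_cong[THEN iffD1, rotated]) (simp add: on_VY_def)
  then have "on_VY g permutes VY"
    by (rule bij_imp_permutes) (simp add: on_VY_def)
  then show ?thesis by (simp add: Sym_def)
qed

text \<open>The parameter space of \<open>local_stab b C\<close>, as a product of subspaces of the local groups.\<close>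

definition param_factor :: "'v \<Rightarrow> ('c \<Rightarrow> 'c) set \<Rightarrow> 'v \<Rightarrow> ('c \<Rightarrow> 'c) set" where
  "param_factor b C p = (if p = b then C else point_stabiliser (local_group p) (in_colour (parent b p)))"

definition param_topology :: "'v \<Rightarrow> ('c \<Rightarrow> 'c) set \<Rightarrow> ('v \<Rightarrow> 'c \<Rightarrow> 'c) topology" where
  "param_topology b C =
     product_topology (\<lambda>p. subtopology (perm_topology (colours p)) (param_factor b C p)) UNIV"

lemma topspace_param_topology:
  assumes "C \<subseteq> local_group b"
  shows "topspace (param_topology b C) = {\<rho>. admissible b \<rho> \<and> \<rho> b \<in> C}"
proof -
  have "topspace (param_topology b C) = {\<rho>. \<forall>p. \<rho> p \<in> Sym (colours p) \<inter> param_factor b C p}"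
    unfolding param_topology_def by (simp add: PiE_UNIV_domain Pi_def)
  also have "\<dots> = {\<rho>. admissible b \<rho> \<and> \<rho> b \<in> C}"
  proof (intro Collect_cong iffI)
    fix \<rho> assume a: "\<forall>p. \<rho> p \<in> Sym (colours p) \<inter> param_factor b C p"
    then have "\<rho> b \<in> C" using a[rule_format, of b] by (simp add: param_factor_def)
    moreover have "\<rho> p \<in> local_group p \<and> \<rho> p (in_colour (parent b p)) = in_colour (parent b p)"
      if "p \<noteq> b" for p
      using a[rule_format, of p] that by (simp add: param_factor_def point_stabiliser_def)
    ultimately show "admissible b \<rho> \<and> \<rho> b \<in> C"
      using assms unfolding admissible_def by blast
  next
    fix \<rho> assume a: "admissible b \<rho> \<and> \<rho> b \<in> C"
    show "\<forall>p. \<rho> p \<in> Sym (colours p) \<inter> param_factor b C p"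
    proof
      fix p show "\<rho> p \<in> Sym (colours p) \<inter> param_factor b C p"
      proof (cases "p = b")
        case True then show ?thesis using a assms local_group_Sym by (auto simp: param_factor_def)
      next
        case False then show ?thesis
          using a local_group_Sym unfolding admissible_def param_factor_def point_stabiliser_def by auto
      qed
    qed
  qed
  finally show ?thesis .
qed

lemma compact_space_param_topology:
  assumes "compactin (perm_topology (colours b)) C"
    and "\<And>p x. x \<in> colours p \<Longrightarrow> compactin (perm_topology (colours p)) (point_stabiliser (local_group p) x)"
  shows "compact_space (param_topology b C)"
  unfolding param_topology_def compact_space_product_topology
proof (rule disjI2, intro ballI)
  fix p :: 'v
  have "compactin (perm_topology (colours p)) (param_factor b C p)"
  proof (cases "p = b")
    case True then show ?thesis using assms(1) by (simp add: param_factor_def)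
  next
    case False
    then have "in_colour (parent b p) \<in> colours p" using parent adj_sym in_colour_mem by blast
    then show ?thesis using False assms(2) by (simp add: param_factor_def)
  qed
  then show "compact_space (subtopology (perm_topology (colours p)) (param_factor b C p))"
    by (rule compact_space_subtopology)
qed

lemma openin_param_topology_agree:
  assumes "finite D"
  shows "openin (param_topology b C) {\<rho>' \<in> topspace (param_topology b C). \<forall>(p,x)\<in>D. \<rho>' p x = \<rho> p x}"
proof -
  let ?T = "param_topology b C"
  have "openin ?T {\<rho>' \<in> topspace ?T. \<rho>' p x = a}" for p x a
  proof -
    have "openin (subtopology (perm_topology (colours p)) (param_factor b C p))
        ({q \<in> Sym (colours p). q x = a} \<inter> param_factor b C p)"
      by (rule openin_subtopology_Int[OF openin_perm_topology_eval])
    then have "openin ?T {\<rho>' \<in> topspace ?T. \<rho>' p \<in> {q \<in> Sym (colours p). q x = a} \<inter> param_factor b C p}"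
      unfolding param_topology_def
      by (rule openin_continuous_map_preimage[OF continuous_map_product_projection[OF UNIV_I]])
    moreover have "{\<rho>' \<in> topspace ?T. \<rho>' p \<in> {q \<in> Sym (colours p). q x = a} \<inter> param_factor b C p}
       = {\<rho>' \<in> topspace ?T. \<rho>' p x = a}"
      unfolding param_topology_def by (auto simp: PiE_UNIV_domain Pi_def)
    ultimately show ?thesis by simp
  qed
  then have "openin ?T ((\<Inter>d\<in>D. {\<rho>' \<in> topspace ?T. \<rho>' (fst d) (snd d) = \<rho> (fst d) (snd d)}) \<inter> topspace ?T)"
    by (intro openin_INT[OF assms])
  moreover have "(\<Inter>d\<in>D. {\<rho>' \<in> topspace ?T. \<rho>' (fst d) (snd d) = \<rho> (fst d) (snd d)}) \<inter> topspace ?T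
     = {\<rho>' \<in> topspace ?T. \<forall>(p,x)\<in>D. \<rho>' p x = \<rho> p x}"
    by force
  ultimately show ?thesis by simp
qed

lemma continuous_map_aut_of:
  assumes "C \<subseteq> local_group b"
  shows "continuous_map (param_topology b C) (perm_topology VY) (\<lambda>\<rho>. on_VY (aut_of b \<rho>))"
  unfolding continuous_map_def
proof (intro conjI allI impI)
  let ?T = "param_topology b C"
  have Sym: "on_VY (aut_of b \<rho>) \<in> Sym VY" if "\<rho> \<in> topspace ?T" for \<rho>
    using on_VY_Sym aut_of_in_U that topspace_param_topology[OF assms] by auto
  then show "(\<lambda>\<rho>. on_VY (aut_of b \<rho>)) \<in> topspace ?T \<rightarrow> topspace (perm_topology VY)" by auto
  fix W assume W: "openin (perm_topology VY) W"
  show "openin ?T {\<rho> \<in> topspace ?T. on_VY (aut_of b \<rho>) \<in> W}"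
  proof (subst openin_subopen, intro ballI)
    fix \<rho> assume \<rho>: "\<rho> \<in> {\<rho> \<in> topspace ?T. on_VY (aut_of b \<rho>) \<in> W}"
    then obtain F where F: "finite F" "F \<subseteq> VY" "{q \<in> Sym VY. \<forall>x\<in>F. q x = on_VY (aut_of b \<rho>) x} \<subseteq> W"
      using W unfolding openin_perm_topology by blast
    have "\<forall>y. \<exists>D. finite D \<and> (\<forall>\<rho>'. (\<forall>(p,x)\<in>D. \<rho>' p x = \<rho> p x) \<longrightarrow> aut_of b \<rho>' y = aut_of b \<rho> y)"
      using aut_of_finitely_determined by blast
    then obtain DD where DD: "\<And>y. finite (DD y)"
      "\<And>y \<rho>'. \<forall>(p,x)\<in>DD y. \<rho>' p x = \<rho> p x \<Longrightarrow> aut_of b \<rho>' y = aut_of b \<rho> y"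
      using choice[of "\<lambda>y D. finite D \<and> (\<forall>\<rho>'. (\<forall>(p,x)\<in>D. \<rho>' p x = \<rho> p x) \<longrightarrow> aut_of b \<rho>' y = aut_of b \<rho> y)"]
      by blast
    define Nbhd where "Nbhd = {\<rho>' \<in> topspace ?T. \<forall>(p,x)\<in>(\<Union>y\<in>F. DD y). \<rho>' p x = \<rho> p x}"
    have "openin ?T Nbhd"
      unfolding Nbhd_def using F(1) DD(1) by (intro openin_param_topology_agree) blast
    moreover have "\<rho> \<in> Nbhd" using \<rho> unfolding Nbhd_def by auto
    moreover have "Nbhd \<subseteq> {\<rho> \<in> topspace ?T. on_VY (aut_of b \<rho>) \<in> W}"
    proof
      fix \<rho>' assume \<rho>': "\<rho>' \<in> Nbhd"
      have "aut_of b \<rho>' y = aut_of b \<rho> y" if "y \<in> F" for y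
      proof (rule DD(2))
        show "\<forall>(p,x)\<in>DD y. \<rho>' p x = \<rho> p x" using \<rho>' that unfolding Nbhd_def by blast
      qed
      then have "on_VY (aut_of b \<rho>') \<in> {q \<in> Sym VY. \<forall>x\<in>F. q x = on_VY (aut_of b \<rho>) x}"
        using Sym \<rho>' F(2) unfolding Nbhd_def on_VY_def by auto
      then show "\<rho>' \<in> {\<rho> \<in> topspace ?T. on_VY (aut_of b \<rho>) \<in> W}"
        using F(3) \<rho>' unfolding Nbhd_def by blast
    qed
    ultimately show "\<exists>T. openin ?T T \<and> \<rho> \<in> T \<and> T \<subseteq> {\<rho> \<in> topspace ?T. on_VY (aut_of b \<rho>) \<in> W}"
      by blast
  qed
qed

lemma compactin_local_stab:
  assumes "C \<subseteq> local_group b" "compactin (perm_topology (colours b)) C"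
    and "\<And>p x. x \<in> colours p \<Longrightarrow> compactin (perm_topology (colours p)) (point_stabiliser (local_group p) x)"
  shows "compactin (perm_topology VY) (on_VY ` local_stab b C)"
proof -
  have "compactin (param_topology b C) (topspace (param_topology b C))"
    using compact_space_param_topology[OF assms(2,3)] unfolding compact_space_def .
  from image_compactin[OF this continuous_map_aut_of[OF assms(1)]]
  have "compactin (perm_topology VY) ((\<lambda>\<rho>. on_VY (aut_of b \<rho>)) ` {\<rho>. admissible b \<rho> \<and> \<rho> b \<in> C})"
    using topspace_param_topology[OF assms(1)] by simp
  then show ?thesis using local_stab_eq_image[OF assms(1)] by (simp add: image_image)
qed

lemma on_VY_comp: "h \<in> U \<Longrightarrow> on_VY (g \<circ> h) = on_VY g \<circ> on_VY h"
  unfolding on_VY_def using U_VY_iff[of h] by (auto simp: fun_eq_iff)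

lemma on_VY_id: "on_VY id = id"
  unfolding on_VY_def by (auto simp: fun_eq_iff)

lemma on_VY_inv: "g \<in> U \<Longrightarrow> inv (on_VY g) = on_VY (inv g)"
proof -
  assume g: "g \<in> U"
  have "g \<circ> inv g = id" "inv g \<circ> g = id" using U_inv_apply[OF g] by (auto simp: fun_eq_iff)
  then have "on_VY g \<circ> on_VY (inv g) = id" "on_VY (inv g) \<circ> on_VY g = id"
    using on_VY_comp[OF U_inv[OF g], of g] on_VY_comp[OF g, of "inv g"] on_VY_id by simp_all
  then show ?thesis by (rule inv_unique_comp)
qed

lemma perm_subgroup_on_VY_U: "perm_subgroup VY (on_VY ` U)"
  unfolding perm_subgroup_def
proof (intro conjI ballI)
  show "on_VY ` U \<subseteq> Sym VY" using on_VY_Sym by blast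
  show "id \<in> on_VY ` U" using U_id on_VY_id by (metis image_eqI)
  fix p q assume "p \<in> on_VY ` U" "q \<in> on_VY ` U"
  then obtain g h where "g \<in> U" "h \<in> U" "p = on_VY g" "q = on_VY h" by blast
  then show "p \<circ> q \<in> on_VY ` U" using on_VY_comp U_comp by (metis image_eqI)
next
  fix p assume "p \<in> on_VY ` U"
  then obtain g where "g \<in> U" "p = on_VY g" by blast
  then show "inv p \<in> on_VY ` U" using on_VY_inv U_inv by (metis image_eqI)
qed

lemma local_stab_local_group: "h \<in> U \<Longrightarrow> h b = b \<Longrightarrow> h \<in> local_stab b (local_group b)"
  unfolding local_stab_def using U_local_action by blast

lemma point_stabiliser_on_VY_U:
  assumes v: "v \<in> VY"
  shows "point_stabiliser (on_VY ` U) v = on_VY ` local_stab v N"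
proof
  have N: "local_group v = N" using v not_VX_iff_VY by (auto simp: local_group_def)
  show "point_stabiliser (on_VY ` U) v \<subseteq> on_VY ` local_stab v N"
  proof
    fix p assume "p \<in> point_stabiliser (on_VY ` U) v"
    then obtain h where h: "h \<in> U" "p = on_VY h" "on_VY h v = v" unfolding point_stabiliser_def by blast
    then have "h v = v" using v by (simp add: on_VY_def)
    with h(1) have "h \<in> local_stab v (local_group v)" by (rule local_stab_local_group)
    then have "h \<in> local_stab v N" using N by simp
    then show "p \<in> on_VY ` local_stab v N" using h(2) by blast
  qed
  show "on_VY ` local_stab v N \<subseteq> point_stabiliser (on_VY ` U) v"
    unfolding local_stab_def point_stabiliser_def using v by (auto simp: on_VY_def)
qed


lemma compactin_local_point_stabiliser:
  assumes "\<forall>x\<in>X. compactin (perm_topology X) (point_stabiliser M x)" "compactin (perm_topology Y) N"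
    and "x \<in> colours p"
  shows "compactin (perm_topology (colours p)) (point_stabiliser (local_group p) x)"
proof (cases "p \<in> VX")
  case True
  then show ?thesis using assms(1,3) by (simp add: colours_def local_group_def)
next
  case False
  have "point_stabiliser N x = {q \<in> Sym Y. q x = x} \<inter> N"
    using N_subgroup unfolding point_stabiliser_def perm_subgroup_def by auto
  moreover have "compactin (perm_topology Y) ({q \<in> Sym Y. q x = x} \<inter> N)"
    using closed_Int_compactin[OF closedin_perm_topology_eval assms(2)] .
  ultimately show ?thesis using False by (simp add: colours_def local_group_def)
qed

lemma compactin_point_stabiliser_on_VY_U:
  assumes "v \<in> VY" "compactin (perm_topology Y) N"
    and "\<And>p x. x \<in> colours p \<Longrightarrow> compactin (perm_topology (colours p)) (point_stabiliser (local_group p) x)"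
  shows "compactin (perm_topology VY) (point_stabiliser (on_VY ` U) v)"
proof -
  have "local_group v = N" "colours v = Y"
    using assms(1) not_VX_iff_VY by (auto simp: local_group_def colours_def)
  then show ?thesis
    using point_stabiliser_on_VY_U[OF assms(1)] compactin_local_stab[of N v] assms(2,3) by simp
qed

section \<open>Compact generation\<close>

lemma local_stab_comp:
  assumes "h1 \<in> local_stab u {\<pi>1}" "h2 \<in> local_stab u {\<pi>2}"
  shows "h1 \<circ> h2 \<in> local_stab u {\<pi>1 \<circ> \<pi>2}"
proof -
  have h1: "h1 \<in> U" "h1 u = u" "\<And>w. E u w \<Longrightarrow> in_colour (h1 w) = \<pi>1 (in_colour w)"
    using assms(1) unfolding local_stab_def by auto
  have h2: "h2 \<in> U" "h2 u = u" "\<And>w. E u w \<Longrightarrow> in_colour (h2 w) = \<pi>2 (in_colour w)"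
    using assms(2) unfolding local_stab_def by auto
  have "in_colour (h1 (h2 w)) = \<pi>1 (\<pi>2 (in_colour w))" if "E u w" for w
    using h1(3) h2(3)[OF that] U_adj_iff[OF h2(1), of u w] h2(2) that by simp
  then show ?thesis unfolding local_stab_def using U_comp[OF h1(1) h2(1)] h1(2) h2(2) by auto
qed

lemma local_stab_inv:
  assumes "h \<in> local_stab u {\<pi>}" "\<pi> \<in> local_group u"
  shows "inv h \<in> local_stab u {inv \<pi>}"
proof -
  have h: "h \<in> U" "h u = u" "\<And>w. E u w \<Longrightarrow> in_colour (h w) = \<pi> (in_colour w)"
    using assms(1) unfolding local_stab_def by auto
  have hu: "inv h u = u" using U_inv_apply[OF h(1)] h(2) by metis
  have "in_colour (inv h w) = inv \<pi> (in_colour w)" if "E u w" for w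
  proof -
    have "E u (inv h w)" using U_adj_iff[OF U_inv[OF h(1)], of u w] that hu by simp
    then have "in_colour w = \<pi> (in_colour (inv h w))" using h(3) U_inv_apply[OF h(1)] by metis
    then show ?thesis using local_group_inv_apply[OF assms(2)] by simp
  qed
  then show ?thesis unfolding local_stab_def using U_inv[OF h(1)] hu by auto
qed

lemma local_stab_divide:
  assumes "h \<in> local_stab u {\<pi>1 \<circ> \<pi>2}" "h2 \<in> local_stab u {\<pi>2}" "\<pi>2 \<in> local_group u"
  shows "h \<circ> inv h2 \<in> local_stab u {\<pi>1}"
proof -
  have "\<pi>1 \<circ> \<pi>2 \<circ> inv \<pi>2 = \<pi>1" using local_group_inv_apply[OF assms(3)] by (auto simp: fun_eq_iff)
  then show ?thesis using local_stab_comp[OF assms(1) local_stab_inv[OF assms(2,3)]] by simp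
qed

lemma local_stab_id_fixes_adj:
  assumes "h \<in> local_stab u {id}" "E u v"
  shows "h v = v"
proof -
  have h: "h \<in> U" "h u = u" "in_colour (h v) = in_colour v"
    using assms unfolding local_stab_def by auto
  then have "E u (h v)" using U_adj_iff[of h u v] assms(2) by simp
  then show ?thesis using in_colour_inj assms(2) h(3) by blast
qed

definition realised_local_actions :: "('v \<Rightarrow> 'v) set \<Rightarrow> 'v \<Rightarrow> ('c \<Rightarrow> 'c) set" where
  "realised_local_actions H u = {\<pi> \<in> local_group u. on_VY ` local_stab u {\<pi>} \<subseteq> H}"

lemma perm_subgroup_realised_local_actions:
  assumes H: "perm_subgroup VY H" and trivial: "on_VY ` local_stab u {id} \<subseteq> H"
  shows "perm_subgroup (colours u) (realised_local_actions H u)"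
  unfolding perm_subgroup_def
proof (intro conjI ballI)
  let ?Q = "realised_local_actions H u"
  show "?Q \<subseteq> Sym (colours u)" using local_group_Sym unfolding realised_local_actions_def by blast
  show "id \<in> ?Q" using trivial local_group_id unfolding realised_local_actions_def by blast
next
  fix \<pi>1 \<pi>2 assume q: "\<pi>1 \<in> realised_local_actions H u" "\<pi>2 \<in> realised_local_actions H u"
  have "on_VY h \<in> H" if h: "h \<in> local_stab u {\<pi>1 \<circ> \<pi>2}" for h
  proof -
    obtain h2 where h2: "h2 \<in> local_stab u {\<pi>2}"
      using local_stab_nonempty q(2) unfolding realised_local_actions_def by blast
    have U: "h2 \<in> U" using h2 unfolding local_stab_def by auto
    have "h \<circ> inv h2 \<in> local_stab u {\<pi>1}"
      using local_stab_divide[OF h h2] q(2) unfolding realised_local_actions_def by blast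
    then have "on_VY (h \<circ> inv h2) \<in> H" "on_VY h2 \<in> H" using q h2 unfolding realised_local_actions_def by blast+
    moreover have "h = (h \<circ> inv h2) \<circ> h2" using U_inv_apply[OF U] by (auto simp: fun_eq_iff)
    ultimately show ?thesis using on_VY_comp[OF U, of "h \<circ> inv h2"] H unfolding perm_subgroup_def by metis
  qed
  then show "\<pi>1 \<circ> \<pi>2 \<in> realised_local_actions H u"
    using q local_group_comp unfolding realised_local_actions_def by blast
next
  fix \<pi> assume q: "\<pi> \<in> realised_local_actions H u"
  have "on_VY h \<in> H" if h: "h \<in> local_stab u {inv \<pi>}" for h
  proof -
    have U: "h \<in> U" using h unfolding local_stab_def by auto
    have "inv h \<in> local_stab u {\<pi>}"
      using local_stab_inv[OF h] local_group_inv inv_inv_eq[OF permutes_bij[OF local_group_permutes]] q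
      unfolding realised_local_actions_def by fastforce
    then have "inv (on_VY (inv h)) \<in> H" using q H unfolding realised_local_actions_def perm_subgroup_def by blast
    then show ?thesis using on_VY_inv[OF U_inv[OF U]] inv_inv_eq[OF bij_U[OF U]] by simp
  qed
  then show "inv \<pi> \<in> realised_local_actions H u"
    using q local_group_inv unfolding realised_local_actions_def by blast
qed

lemma stabiliser_in_subgroup:
  assumes H: "perm_subgroup VY H"
    and gen: "generated_perm_group (colours u) C = local_group u"
    and C: "on_VY ` local_stab u C \<subseteq> H" and trivial: "on_VY ` local_stab u {id} \<subseteq> H"
    and h: "h \<in> U" "h u = u"
  shows "on_VY h \<in> H"
proof -
  have "C \<subseteq> realised_local_actions H u"
    using C gen generated_perm_group_superset[of C "colours u"]
    unfolding realised_local_actions_def local_stab_def by blast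
  then have "local_group u \<subseteq> realised_local_actions H u"
    using generated_perm_group_least[OF perm_subgroup_realised_local_actions[OF H trivial]] gen by metis
  moreover have "h \<in> local_stab u {local_action h u}"
    using local_action[OF h(1)] h unfolding local_stab_def by blast
  ultimately show ?thesis using local_action[OF h(1)] unfolding realised_local_actions_def by blast
qed

lemma stabiliser_moves_adj: "E x y \<Longrightarrow> E x y' \<Longrightarrow> \<exists>a\<in>U. a x = x \<and> a y = y'"
proof -
  assume xy: "E x y" and xy': "E x y'"
  have "in_colour y \<in> colours x" "in_colour y' \<in> colours x"
    using in_colour_mem[OF xy] in_colour_mem[OF xy'] .
  then obtain \<pi> where \<pi>: "\<pi> \<in> local_group x" "\<pi> (in_colour y) = in_colour y'"
    using local_group_transitive by blast
  then obtain a where "a \<in> local_stab x {\<pi>}" using local_stab_nonempty by blast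
  then have a: "a \<in> U" "a x = x" "in_colour (a y) = in_colour y'"
    unfolding local_stab_def using xy \<pi>(2) by auto
  moreover have "E x (a y)" using U_adj_iff[OF a(1), of x y] xy a(2) by simp
  ultimately show ?thesis using in_colour_inj[OF _ xy'] by blast
qed

lemma subgroup_reaches_adj:
  assumes H: "perm_subgroup VY H" and xy: "E x y" and stab: "\<forall>a\<in>U. a x = x \<longrightarrow> on_VY a \<in> H"
    and k: "k \<in> U" "on_VY k \<in> H" and w: "E (k x) w"
  shows "\<exists>k'\<in>U. on_VY k' \<in> H \<and> k' y = w"
proof -
  have "E x (inv k w)" using U_adj_iff[OF k(1), of x "inv k w"] w U_inv_apply[OF k(1)] by simp
  then obtain a where a: "a \<in> U" "a x = x" "a y = inv k w" using stabiliser_moves_adj xy by blast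
  have "on_VY a \<in> H" using stab a(1,2) by blast
  then have "on_VY k \<circ> on_VY a \<in> H" using H k(2) unfolding perm_subgroup_def by blast
  then have "on_VY (k \<circ> a) \<in> H" using on_VY_comp[OF a(1), of k] by simp
  moreover have "(k \<circ> a) y = w" using a(3) U_inv_apply[OF k(1)] by simp
  ultimately show ?thesis using U_comp[OF k(1) a(1)] by blast
qed

text \<open>A subgroup containing the stabilisers of both ends of an edge is everything: walking from \<open>u\<close>
  shows every vertex is the image of \<open>u\<close> or \<open>v\<close> under an element of the subgroup.\<close>

lemma on_VY_U_subset_if_edge_stabilisers:
  assumes H: "perm_subgroup VY H" and uv: "E u v"
    and stab_u: "\<forall>h\<in>U. h u = u \<longrightarrow> on_VY h \<in> H" and stab_v: "\<forall>h\<in>U. h v = v \<longrightarrow> on_VY h \<in> H"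
  shows "on_VY ` U \<subseteq> H"
proof
  have reach: "\<exists>k\<in>U. on_VY k \<in> H \<and> (k u = w \<or> k v = w)" for w
    using adj_connected[of u w]
  proof (induction rule: rtranclp_induct)
    case base
    have "on_VY id \<in> H" using on_VY_id H unfolding perm_subgroup_def by simp
    then show ?case using U_id by auto
  next
    case (step y z)
    then obtain k where k: "k \<in> U" "on_VY k \<in> H" "k u = y \<or> k v = y" by blast
    show ?case
    proof (cases "k u = y")
      case True
      then obtain k' where "k' \<in> U" "on_VY k' \<in> H" "k' v = z"
        using subgroup_reaches_adj[OF H uv stab_u k(1,2)] step(2) by blast
      then show ?thesis by blast
    next
      case False
      then obtain k' where "k' \<in> U" "on_VY k' \<in> H" "k' u = z"
        using subgroup_reaches_adj[OF H adj_sym[OF uv] stab_v k(1,2)] step(2) k(3) by blast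
      then show ?thesis by blast
    qed
  qed
  fix p assume "p \<in> on_VY ` U"
  then obtain h where h: "h \<in> U" "p = on_VY h" by blast
  obtain k where k: "k \<in> U" "on_VY k \<in> H" "k u = h u \<or> k v = h u" using reach by blast
  have "k v \<noteq> h u"
    using U_VX_iff[OF k(1), of v] U_VX_iff[OF h(1), of u] adj_VX_iff_not_VX[OF uv] by auto
  then have "(inv k \<circ> h) u = u" using k(3) U_inv_apply[OF k(1)] by (metis comp_apply)
  then have "on_VY (inv k \<circ> h) \<in> H" using stab_u U_comp[OF U_inv[OF k(1)] h(1)] by blast
  moreover have "on_VY h = on_VY k \<circ> on_VY (inv k \<circ> h)"
  proof -
    have "k \<circ> (inv k \<circ> h) = h" using U_inv_apply[OF k(1)] by (simp add: fun_eq_iff)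
    then show ?thesis using on_VY_comp[OF U_comp[OF U_inv[OF k(1)] h(1)], of k] by simp
  qed
  ultimately show "p \<in> H" using h(2) k(2) H unfolding perm_subgroup_def by simp
qed

lemma compactly_generated_on_VY_U:
  assumes C: "C \<subseteq> M" "compactin (perm_topology X) C" "generated_perm_group X C = M"
    and N: "compactin (perm_topology Y) N"
    and stabs: "\<And>p x. x \<in> colours p \<Longrightarrow> compactin (perm_topology (colours p)) (point_stabiliser (local_group p) x)"
  shows "compactly_generated VY (on_VY ` U)"
proof -
  obtain u v where u: "u \<in> VX" and uv: "E u v" using VX_nonempty exists_adj by blast
  then have loc: "local_group u = M" "colours u = X" "local_group v = N" "colours v = Y"
    using adj_VX_iff_not_VX[OF uv] by (auto simp: local_group_def colours_def)
  define K where "K = on_VY ` local_stab u C \<union> on_VY ` local_stab v N"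
  define H where "H = generated_perm_group VY K"
  have KU: "K \<subseteq> on_VY ` U" unfolding K_def local_stab_def by blast
  have Kc: "compactin (perm_topology VY) K"
    unfolding K_def using compactin_local_stab[of C u] compactin_local_stab[of N v] C N stabs loc
    by (intro compactin_Un) simp_all
  have "K \<subseteq> Sym VY" using KU perm_subgroup_on_VY_U unfolding perm_subgroup_def by blast
  then have H: "perm_subgroup VY H" unfolding H_def by (rule perm_subgroup_generated_perm_group)
  have KH: "K \<subseteq> H" unfolding H_def by (rule generated_perm_group_superset)
  have stab_v: "\<forall>h\<in>U. h v = v \<longrightarrow> on_VY h \<in> H"
  proof (intro ballI impI)
    fix h assume "h \<in> U" "h v = v"
    then have "h \<in> local_stab v (local_group v)" by (rule local_stab_local_group)
    then have "on_VY h \<in> K" using loc(3) unfolding K_def by simp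
    then show "on_VY h \<in> H" using KH by blast
  qed
  have "on_VY h \<in> H" if "h \<in> local_stab u {id}" for h
    using stab_v local_stab_id_fixes_adj[OF that uv] that unfolding local_stab_def by blast
  then have "on_VY ` local_stab u {id} \<subseteq> H" by blast
  moreover have "on_VY ` local_stab u C \<subseteq> H" using KH unfolding K_def by blast
  moreover have "generated_perm_group (colours u) C = local_group u" using C(3) loc by simp
  ultimately have stab_u: "\<forall>h\<in>U. h u = u \<longrightarrow> on_VY h \<in> H"
    using stabiliser_in_subgroup[OF H] by blast
  have "H \<subseteq> on_VY ` U" unfolding H_def by (rule generated_perm_group_least[OF perm_subgroup_on_VY_U KU])
  then have "H = on_VY ` U" using on_VY_U_subset_if_edge_stabilisers[OF H uv stab_u stab_v] by blast
  then show ?thesis unfolding compactly_generated_def H_def using KU Kc by blast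
qed

end

theorem theorem6p3:
  fixes X Y :: "'c set" and M N :: "('c \<Rightarrow> 'c) set"
    and E :: "'v \<Rightarrow> 'v \<Rightarrow> bool" and VX VY :: "'v set" and c :: "'v \<times> 'v \<Rightarrow> 'c"
  assumes "X \<inter> Y = {}"
    and "\<exists>a\<in>X. \<exists>b\<in>X. a \<noteq> b" and "\<exists>a\<in>Y. \<exists>b\<in>Y. a \<noteq> b"
    and "perm_subgroup X M" and "perm_subgroup Y N"
    and "transitive_on X M" and "transitive_on Y N"
    and "biregular_tree E VX VY X Y"
    and "legal_colouring E VX VY X Y c"
    and "compactly_generated X M"
    and "\<forall>x\<in>X. compactin (perm_topology X) (point_stabiliser M x)"
    and "compactin (perm_topology Y) N"
  shows "compactly_generated VY (box_product E VX VY c M N)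
    \<and> (\<forall>v\<in>VY. compactin (perm_topology VY) (point_stabiliser (box_product E VX VY c M N) v))"
proof -
  interpret box_data E VX VY X Y c M N
  proof unfold_locales
    show "X \<noteq> {}" "Y \<noteq> {}" using assms(2,3) by blast+
  qed (fact assms)+
  obtain C where C: "C \<subseteq> M" "compactin (perm_topology X) C" "generated_perm_group X C = M"
    using assms(10) unfolding compactly_generated_def by blast
  note stabs = compactin_local_point_stabiliser[OF assms(11,12)]
  show ?thesis
    unfolding box_product_eq
    using compactly_generated_on_VY_U[OF C assms(12) stabs]
      compactin_point_stabiliser_on_VY_U[OF _ assms(12) stabs] by blast
qed

end
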